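(* Let $A$ be a real $m\times n$ matrix with $r:=\operatorname{rank}(A)<n$ and let $k:=n-r$. Let $\beta\in\mathbb R_m$, $\varepsilon\ge0$, $F\in S(A,\beta,\varepsilon)$, and let $y\in\mathbb R_n$, $\delta\ge0$ with $\|Ay^T-\beta^T\|_\infty\le\delta$. Put $D:=(A^T)^\dagger$. Fix a basis $(x_1^T,\dots,x_k^T)$ of $\ker(A)$, let $x_{sj}$ be the $j$-th coordinate of $x_s$, and let $X:=(x_{sj})$ be the $k\times n$ matrix with rows $x_1,\dots,x_k$. Define $\pi_s(u):=u^{x_s}$ for $u\in\mathbb R_n^+$, and for $w\in\mathbb R_k^+$ define $$\psi(w):=\exp\big(X^\dagger\log(w)^T\big)\in\mathbb R_n^+,\qquad G(w):=F(\psi(w))/\psi(w)^y.$$ Let $M:=\max\{|x_{sj}|:1\le s\le k,\,1\le j\le n\}$ and let $K>1$. Then for every $v=(v_1,\dots,v_n)\in\mathbb R_n^+$ with $K^{-1}\le v_i\le K$ for all $i$, $$|F(v)-G(\pi_1(v),\dots,\pi_k(v))v^y|\le|F(v)|\Big((1+\varepsilon)K^{m\delta\|D\|(nM\|X^\dagger\|+1)}-1\Big).$$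
   Context: $\mathbb R_m$ denotes real row vectors of length $m$, $\mathbb R_m^+$ those with all entries strictly positive (similarly $\mathbb R_n^+,\mathbb R_k^+$). For $c\in\mathbb R_m^+$ and $\alpha\in\mathbb R_m$, $c^\alpha:=\prod_i c_i^{\alpha_i}$ (similarly $u^x$, $v^y$). For a row vector $w=(w_1,\dots,w_k)$ with positive entries, $\log(w):=(\log w_1,\dots,\log w_k)$ (natural logarithm), and for a column vector $z=(z_1,\dots,z_n)^T$, $\exp(z):=(e^{z_1},\dots,e^{z_n})$ (a row vector). For a real $m\times n$ matrix $A$ with columns $\alpha_1^T,\dots,\alpha_n^T$, $\beta\in\mathbb R_m$ and $\varepsilon\ge0$, $S(A,\beta,\varepsilon)$ is the set of all $F:\mathbb R_n^+\to\mathbb R$ with $$|F(v_1c^{\alpha_1},\dots,v_nc^{\alpha_n})-F(v_1,\dots,v_n)c^\beta|\le\varepsilon|F(v_1,\dots,v_n)|c^\beta$$ for all $v_1,\dots,v_n>0$ and all $c\in\mathbb R_m^+$. $B^\dagger$ is the Moore–Penrose pseudoinverse of a real matrix $B$; $\|\cdot\|_\infty$ is the maximum norm and $\|B\|=\max_i\sum_j|b_{ij}|$ the induced matrix norm. *)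

theory Defs
  imports "HOL-Analysis.Analysis"
begin

definition vpow :: "real^'a \<Rightarrow> real^'a \<Rightarrow> real" where
  "vpow c \<alpha> = (\<Prod>i\<in>UNIV. (c $ i) powr (\<alpha> $ i))"

definition pos_vec :: "real^'a \<Rightarrow> bool" where
  "pos_vec v \<longleftrightarrow> (\<forall>i. 0 < v $ i)"

definition S_class :: "real^'n^'m \<Rightarrow> real^'m \<Rightarrow> real \<Rightarrow> (real^'n \<Rightarrow> real) set" where
  "S_class A \<beta> \<epsilon> = {F. \<forall>v c. pos_vec v \<longrightarrow> pos_vec c \<longrightarrow>
      \<bar>F (\<chi> j. v $ j * vpow c (column j A)) - F v * vpow c \<beta>\<bar>
        \<le> \<epsilon> * \<bar>F v\<bar> * vpow c \<beta>}"

definition pinv :: "real^'n^'m \<Rightarrow> real^'m^'n" where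
  "pinv A = (THE B. A ** B ** A = A \<and> B ** A ** B = B \<and>
                    transpose (A ** B) = A ** B \<and> transpose (B ** A) = B ** A)"

definition maxnorm :: "real^'a \<Rightarrow> real" where
  "maxnorm x = Max (range (\<lambda>i. \<bar>x $ i\<bar>))"

text \<open>Induced (row-sum) matrix norm for the maximum norm.\<close>
definition mat_inf_norm :: "real^'n^'m \<Rightarrow> real" where
  "mat_inf_norm B = Max (range (\<lambda>i. \<Sum>j\<in>UNIV. \<bar>B $ i $ j\<bar>))"

end

theory Submission
  imports Defs
begin

text \<open>
  Write \<open>log v = p + r\<close>, where \<open>p = X\<^sup>\<dagger>X log v\<close> is the orthogonal projection of \<open>log v\<close>
  onto \<open>ker A\<close> (the row space of \<open>X\<close>) and \<open>r\<close> is orthogonal to \<open>ker A\<close>. Then \<open>r\<close> lies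
  in the range of \<open>A\<^sup>T\<close>, so \<open>r = A\<^sup>Tz\<close> with \<open>z = D r\<close>, and \<open>\<psi>(\<pi>(v)) = exp p\<close> arises from
  \<open>v\<close> by the scaling \<open>c = exp(-z)\<close>. The defining inequality of \<open>S(A,\<beta>,\<epsilon>)\<close> compares
  \<open>F(exp p)\<close> with \<open>F(v) c\<^sup>\<beta>\<close>, while \<open>v\<^sup>y / (exp p)\<^sup>y = exp((Ay)\<cdot>z)\<close>; hence only the
  defect \<open>(Ay - \<beta>)\<cdot>z\<close> remains, and it is at most \<open>m\<delta>\<parallel>D\<parallel>(nM\<parallel>X\<^sup>\<dagger>\<parallel> + 1) ln K\<close>
  because \<open>\<bar>log v\<^sub>i\<bar> \<le> ln K\<close>.
\<close>

section \<open>The Moore--Penrose pseudoinverse\<close>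

text \<open>Keep \<open>transpose A *v x\<close> from being rewritten to \<open>x v* A\<close>, the form used below.\<close>
declare transpose_matrix_vector[simp del] vector_transpose_matrix[simp del]

lemma inner_transpose_mult:
  fixes C :: "real^'a^'b"
  shows "(transpose C *v a) \<bullet> b = a \<bullet> (C *v b)"
  by (simp only: transpose_matrix_vector dot_lmul_matrix)

lemma orthogonal_decomp_range:
  fixes C :: "real^'a^'b"
  obtains x e where "y = C *v x + e" and "transpose C *v e = 0"
proof -
  let ?R = "range (\<lambda>u. C *v u)"
  obtain p e where p: "p \<in> span ?R" and orth: "\<And>w. w \<in> span ?R \<Longrightarrow> orthogonal e w"
    and y: "y = p + e"
    using orthogonal_subspace_decomp_exists[of ?R y] by blast
  have "subspace ?R"
    by (rule linear_subspace_image[OF matrix_vector_mul_linear subspace_UNIV])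
  then have "p \<in> ?R"
    using p span_eq_iff by blast
  then obtain x where x: "p = C *v x"
    by blast
  have "(transpose C *v e) \<bullet> u = 0" for u
    using orth[of "C *v u"] by (simp add: span_base orthogonal_def inner_transpose_mult)
  then have "transpose C *v e = 0"
    using inner_eq_zero_iff by blast
  then show ?thesis
    using that x y by blast
qed

lemma orthogonal_kernel_in_range_transpose:
  fixes A :: "real^'a^'b"
  assumes "\<And>k. A *v k = 0 \<Longrightarrow> x \<bullet> k = 0"
  obtains u where "x = transpose A *v u"
proof -
  obtain u e where x: "x = transpose A *v u + e" and "transpose (transpose A) *v e = 0"
    by (rule orthogonal_decomp_range)
  then have "A *v e = 0"
    by simp
  then have "(transpose A *v u) \<bullet> e = 0"
    by (simp add: inner_transpose_mult)
  then have "e \<bullet> e = 0"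
    using assms[OF \<open>A *v e = 0\<close>] x by (simp add: inner_add_left)
  then show ?thesis
    using that x by simp
qed

lemma transpose_eq_self_if_inner:
  fixes M :: "real^'a^'a"
  assumes "\<And>x y. (M *v x) \<bullet> y = x \<bullet> (M *v y)"
  shows "transpose M = M"
proof -
  have "transpose M *v y = M *v y" for y
  proof -
    have "x \<bullet> (transpose M *v y) = x \<bullet> (M *v y)" for x
      using assms[of x y] inner_transpose_mult[of M y x] by (simp add: inner_commute)
    then have "(transpose M *v y - M *v y) \<bullet> (transpose M *v y - M *v y) = 0"
      by (simp add: inner_diff_right)
    then show ?thesis by simp
  qed
  then show ?thesis by (simp add: matrix_eq)
qed

definition penrose_inverse :: "real^'n^'m \<Rightarrow> real^'m^'n \<Rightarrow> bool" where
  "penrose_inverse A B \<longleftrightarrow> A ** B ** A = A \<and> B ** A ** B = B \<and>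
     transpose (A ** B) = A ** B \<and> transpose (B ** A) = B ** A"

lemma penrose_inverse_unique:
  assumes "penrose_inverse A B" and "penrose_inverse A C"
  shows "B = C"
proof -
  from assms have AB: "A ** B ** A = A" "B ** A ** B = B"
      "transpose (A ** B) = A ** B" "transpose (B ** A) = B ** A"
    and AC: "A ** C ** A = A" "C ** A ** C = C"
      "transpose (A ** C) = A ** C" "transpose (C ** A) = C ** A"
    unfolding penrose_inverse_def by auto
  have "B = B ** (A ** B)" using AB(2) by (simp add: matrix_mul_assoc)
  also have "\<dots> = B ** transpose (A ** C ** A ** B)" using AB(3) AC(1) by simp
  also have "\<dots> = B ** (transpose (A ** B) ** transpose (A ** C))"
    by (simp add: matrix_transpose_mul matrix_mul_assoc)
  also have "\<dots> = B ** (A ** B) ** (A ** C)" using AB(3) AC(3) by (simp add: matrix_mul_assoc)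
  also have "\<dots> = B ** A ** C" using AB(2) by (simp add: matrix_mul_assoc)
  finally have B: "B = B ** A ** C" .
  have "C = (C ** A) ** C" using AC(2) by (simp add: matrix_mul_assoc)
  also have "\<dots> = transpose (C ** (A ** B ** A)) ** C" using AC(4) AB(1) by simp
  also have "\<dots> = (transpose (B ** A) ** transpose (C ** A)) ** C"
    by (simp add: matrix_transpose_mul matrix_mul_assoc)
  also have "\<dots> = B ** A ** (C ** A ** C)" using AB(4) AC(4) by (simp add: matrix_mul_assoc)
  also have "\<dots> = B ** A ** C" using AC(2) by simp
  finally show ?thesis using B by simp
qed

lemma row_space_inverse_exists:
  fixes A :: "real^'n^'m"
  obtains B :: "real^'m^'n"
  where "\<And>y. B *v y \<in> range (\<lambda>u. transpose A *v u)"
    and "\<And>w. w \<in> range (\<lambda>u. transpose A *v u) \<Longrightarrow> B *v (A *v w) = w"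
    and "\<And>e. transpose A *v e = 0 \<Longrightarrow> B *v e = 0"
proof -
  define W where "W = range (\<lambda>u. transpose A *v u)"
  define T where "T = transpose A ** A"
  have subW: "subspace W" unfolding W_def
    by (rule linear_subspace_image[OF matrix_vector_mul_linear subspace_UNIV])
  have Tv: "T *v v = transpose A *v (A *v v)" for v
    by (simp add: T_def matrix_vector_mul_assoc)
  have T_kernel: "w = 0" if "w \<in> W" and "T *v w = 0" for w
  proof -
    obtain u where u: "w = transpose A *v u" using \<open>w \<in> W\<close> unfolding W_def by blast
    have "(A *v w) \<bullet> (A *v w) = w \<bullet> (T *v w)"
      using inner_transpose_mult[of A "A *v w" w] by (simp add: Tv inner_commute)
    then have "A *v w = 0" using \<open>T *v w = 0\<close> by simp
    moreover have "w \<bullet> w = u \<bullet> (A *v w)"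
      using u inner_transpose_mult[of A u w] by simp
    ultimately show ?thesis by simp
  qed
  have "inj_on (\<lambda>v. T *v v) W"
  proof (rule inj_onI)
    fix x x' assume "x \<in> W" "x' \<in> W" "T *v x = T *v x'"
    then have "x - x' \<in> W" "T *v (x - x') = 0"
      by (auto simp: subspace_diff[OF subW] matrix_vector_mult_diff_distrib)
    then show "x = x'" using T_kernel[of "x - x'"] by simp
  qed
  \<comment> \<open>\<open>A\<^sup>TA\<close> is injective on the row space, so a left inverse of it composed with \<open>A\<^sup>T\<close> works\<close>
  then obtain h where hW: "range h \<subseteq> W" and hl: "linear h" and hinv: "\<forall>v\<in>W. h (T *v v) = v"
    using linear_exists_left_inverse_on[OF matrix_vector_mul_linear subW] by blast
  have gl: "linear (\<lambda>y. h (transpose A *v y))"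
    using linear_compose[OF matrix_vector_mul_linear[of "transpose A"] hl] by (simp only: o_def)
  define B where "B = matrix (\<lambda>y. h (transpose A *v y))"
  have Bv: "B *v y = h (transpose A *v y)" for y
    using fun_cong[OF matrix_vector_mul(2)[OF gl], of y] by (simp add: B_def)
  show ?thesis
  proof (rule that)
    show "B *v y \<in> range (\<lambda>u. transpose A *v u)" for y
      using hW by (auto simp: Bv W_def)
    show "B *v (A *v w) = w" if "w \<in> range (\<lambda>u. transpose A *v u)" for w
    proof -
      have "w \<in> W" using that by (simp add: W_def)
      then show ?thesis using hinv by (simp add: Bv Tv)
    qed
    show "B *v e = 0" if "transpose A *v e = 0" for e
      using that hl by (simp add: Bv linear_0)
  qed
qed

lemma penrose_inverse_of_row_space_inverse:
  fixes A :: "real^'n^'m" and B :: "real^'m^'n"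
  assumes B_range: "\<And>y. B *v y \<in> range (\<lambda>u. transpose A *v u)"
    and B_inv: "\<And>w. w \<in> range (\<lambda>u. transpose A *v u) \<Longrightarrow> B *v (A *v w) = w"
    and B_null: "\<And>e. transpose A *v e = 0 \<Longrightarrow> B *v e = 0"
  shows "penrose_inverse A B"
proof -
  define W where "W = range (\<lambda>u. transpose A *v u)"
  have split_domain: "\<exists>w k. x = w + k \<and> w \<in> W \<and> A *v k = 0" for x
  proof -
    obtain u k where "x = transpose A *v u + k" "transpose (transpose A) *v k = 0"
      by (rule orthogonal_decomp_range)
    then show ?thesis by (auto simp: W_def)
  qed
  have orth: "w \<bullet> k = 0" if "w \<in> W" and "A *v k = 0" for w k
  proof -
    obtain u where "w = transpose A *v u" using \<open>w \<in> W\<close> unfolding W_def by blast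
    then show ?thesis using inner_transpose_mult[of A u k] \<open>A *v k = 0\<close> by simp
  qed
  have BA: "B *v (A *v (w + k)) = w" if "w \<in> W" and "A *v k = 0" for w k
    using B_inv[of w] that by (simp add: matrix_vector_right_distrib W_def)
  have ABA: "A *v (B *v (A *v x)) = A *v x" for x
    using split_domain[of x] BA by (auto simp: matrix_vector_right_distrib)
  have AB: "A *v (B *v (A *v x + e)) = A *v x" if "transpose A *v e = 0" for x e
    using ABA B_null[OF that] by (simp add: matrix_vector_right_distrib)
  have "A ** B ** A = A"
    using ABA by (simp add: matrix_eq matrix_vector_mul_assoc[symmetric])
  moreover have "B ** A ** B = B"
    using B_range B_inv by (simp add: matrix_eq matrix_vector_mul_assoc[symmetric])
  moreover have "transpose (A ** B) = A ** B"
  proof (rule transpose_eq_self_if_inner)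
    fix y y' :: "real^'m"
    obtain x e where y: "y = A *v x + e" "transpose A *v e = 0"
      by (rule orthogonal_decomp_range)
    obtain x' e' where y': "y' = A *v x' + e'" "transpose A *v e' = 0"
      by (rule orthogonal_decomp_range)
    have "(A *v x) \<bullet> e' = 0" "e \<bullet> (A *v x') = 0"
      using inner_transpose_mult[of A e' x] inner_transpose_mult[of A e x'] y y'
      by (simp_all add: inner_commute)
    then show "((A ** B) *v y) \<bullet> y' = y \<bullet> ((A ** B) *v y')"
      using AB y y'
      by (simp add: matrix_vector_mul_assoc[symmetric] inner_add_left inner_add_right inner_commute)
  qed
  moreover have "transpose (B ** A) = B ** A"
  proof (rule transpose_eq_self_if_inner)
    fix x x' :: "real^'n"
    obtain w k where x: "x = w + k" "w \<in> W" "A *v k = 0" using split_domain by blast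
    obtain w' k' where x': "x' = w' + k'" "w' \<in> W" "A *v k' = 0" using split_domain by blast
    show "((B ** A) *v x) \<bullet> x' = x \<bullet> ((B ** A) *v x')"
      using BA x x' orth[of w k'] orth[of w' k]
      by (simp add: matrix_vector_mul_assoc[symmetric] inner_add_left inner_add_right inner_commute)
  qed
  ultimately show ?thesis
    unfolding penrose_inverse_def by blast
qed

lemma penrose_inverse_pinv: "penrose_inverse A (pinv A)"
proof -
  obtain B where "penrose_inverse A B"
    using row_space_inverse_exists penrose_inverse_of_row_space_inverse by metis
  moreover have "pinv A = (THE B. penrose_inverse A B)"
    by (simp add: pinv_def penrose_inverse_def)
  ultimately show ?thesis
    using penrose_inverse_unique theI by metis
qed

lemma mult_pinv_mult_vector: "A *v (pinv A *v (A *v x)) = A *v x"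
proof -
  have "A ** pinv A ** A = A"
    using penrose_inverse_pinv[of A] by (simp add: penrose_inverse_def)
  then show ?thesis
    by (metis matrix_vector_mul_assoc)
qed

lemma kernel_projection_residual_in_range_transpose:
  fixes A :: "real^'n^'m" and X :: "real^'n^'k" and x :: "real^'n"
  assumes "span (rows X) = {x. A *v x = 0}"
  defines "r \<equiv> x - pinv X *v (X *v x)"
  shows "transpose A *v (pinv (transpose A) *v r) = r"
proof -
  have Xr: "X *v r = 0"
    by (simp add: r_def matrix_vector_mult_diff_distrib mult_pinv_mult_vector)
  have "orthogonal r q" if q: "q \<in> rows X" for q
  proof -
    obtain s where "q = row s X" using q by (auto simp: rows_def)
    then have "r \<bullet> q = (X *v r) $ s"
      by (simp add: row_def matrix_vector_mult_def inner_vec_def mult.commute)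
    then show ?thesis using Xr by (simp add: orthogonal_def)
  qed
  then have "r \<bullet> k = 0" if "A *v k = 0" for k
    using orthogonal_to_span[of k "rows X" r] assms(1) that by (simp add: orthogonal_def)
  then obtain u where "r = transpose A *v u"
    by (rule orthogonal_kernel_in_range_transpose)
  then show ?thesis
    using mult_pinv_mult_vector[of "transpose A" u] by simp
qed

section \<open>Maximum-norm bounds\<close>

lemma maxnorm_ge: "\<bar>x $ i\<bar> \<le> maxnorm x"
  unfolding maxnorm_def by (rule Max_ge) auto

lemma abs_inner_le:
  fixes x y :: "real^'a"
  assumes "\<And>i. \<bar>x $ i\<bar> \<le> a" and "\<And>i. \<bar>y $ i\<bar> \<le> b"
  shows "\<bar>x \<bullet> y\<bar> \<le> real CARD('a) * a * b"
proof -
  have "0 \<le> a" using assms(1) by (meson abs_ge_zero order_trans)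
  have "\<bar>x \<bullet> y\<bar> \<le> (\<Sum>i\<in>UNIV. \<bar>x $ i * y $ i\<bar>)"
    unfolding inner_vec_def by (simp add: sum_abs)
  also have "\<dots> \<le> (\<Sum>i::'a\<in>UNIV. a * b)"
    by (rule sum_mono) (simp add: abs_mult mult_mono[OF assms \<open>0 \<le> a\<close> abs_ge_zero])
  finally show ?thesis by simp
qed

lemma abs_matrix_vector_mult_le:
  fixes B :: "real^'a^'b"
  assumes "\<And>j. \<bar>x $ j\<bar> \<le> c"
  shows "\<bar>(B *v x) $ i\<bar> \<le> mat_inf_norm B * c"
proof -
  have "0 \<le> c" using assms by (meson abs_ge_zero order_trans)
  have "\<bar>(B *v x) $ i\<bar> \<le> (\<Sum>j\<in>UNIV. \<bar>B $ i $ j * x $ j\<bar>)"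
    by (simp add: matrix_vector_mult_def sum_abs)
  also have "\<dots> \<le> (\<Sum>j\<in>UNIV. \<bar>B $ i $ j\<bar>) * c"
    unfolding sum_distrib_right by (rule sum_mono) (simp add: abs_mult assms mult_left_mono)
  also have "\<dots> \<le> mat_inf_norm B * c"
    unfolding mat_inf_norm_def by (rule mult_right_mono[OF Max_ge \<open>0 \<le> c\<close>]) auto
  finally show ?thesis .
qed

lemma abs_kernel_projection_residual_le:
  fixes X :: "real^'n^'k"
  assumes "\<And>j. \<bar>x $ j\<bar> \<le> c" and "\<And>s j. \<bar>X $ s $ j\<bar> \<le> M"
  shows "\<bar>(x - pinv X *v (X *v x)) $ j\<bar> \<le> c * (real CARD('n) * M * mat_inf_norm (pinv X) + 1)"
proof -
  have "\<bar>(X *v x) $ s\<bar> \<le> real CARD('n) * M * c" for s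
  proof -
    have "(X *v x) $ s = (X $ s) \<bullet> x"
      by (simp add: matrix_vector_mult_def inner_vec_def)
    then show ?thesis using abs_inner_le[of "X $ s" M x c] assms by simp
  qed
  then have "\<bar>(pinv X *v (X *v x)) $ j\<bar> \<le> mat_inf_norm (pinv X) * (real CARD('n) * M * c)"
    by (rule abs_matrix_vector_mult_le)
  then show ?thesis
    using assms(1)[of j] by (simp add: algebra_simps abs_triangle_ineq4 order_trans)
qed

section \<open>Monomials and the class \<open>S(A,\<beta>,\<epsilon>)\<close>\<close>

definition vec_ln :: "real^'a \<Rightarrow> real^'a" where
  "vec_ln v = (\<chi> i. ln (v $ i))"

definition vec_exp :: "real^'a \<Rightarrow> real^'a" where
  "vec_exp x = (\<chi> i. exp (x $ i))"

lemma pos_vec_vec_exp: "pos_vec (vec_exp x)"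
  by (simp add: pos_vec_def vec_exp_def)

lemma vec_ln_vec_exp [simp]: "vec_ln (vec_exp x) = x"
  by (simp add: vec_ln_def vec_exp_def vec_eq_iff)

lemma vpow_eq_exp_inner: "pos_vec c \<Longrightarrow> vpow c a = exp (a \<bullet> vec_ln c)"
  by (simp add: pos_vec_def vpow_def vec_ln_def inner_vec_def powr_def exp_sum less_imp_neq[symmetric])

lemma pos_vec_if_inverse_le:
  assumes "0 < K" and "\<forall>i. inverse K \<le> v $ i"
  shows "pos_vec v"
  using assms by (auto simp: pos_vec_def intro: less_le_trans[of 0 "inverse K"])

lemma abs_vec_ln_le:
  assumes "inverse K \<le> v $ i" and "v $ i \<le> K" and "0 < K"
  shows "\<bar>vec_ln v $ i\<bar> \<le> ln K"
proof -
  have "0 < v $ i" using assms by (meson inverse_positive_iff_positive less_le_trans)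
  then have "ln (v $ i) \<le> ln K" and "- ln K \<le> ln (v $ i)"
    using assms by (simp_all flip: ln_inverse)
  then show ?thesis by (simp add: vec_ln_def)
qed

lemma S_class_shift:
  assumes "F \<in> S_class A \<beta> \<epsilon>" and "pos_vec v" and "pos_vec u"
    and "transpose A *v z = vec_ln v - vec_ln u"
  shows "\<bar>F u - F v * exp (- (\<beta> \<bullet> z))\<bar> \<le> \<epsilon> * \<bar>F v\<bar> * exp (- (\<beta> \<bullet> z))"
proof -
  define c where "c = vec_exp (- z)"
  have c: "pos_vec c" by (simp add: c_def pos_vec_vec_exp)
  have "v $ j * vpow c (column j A) = u $ j" for j
  proof -
    have "vpow c (column j A) = exp (- (column j A \<bullet> z))"
      using vpow_eq_exp_inner[OF c] by (simp add: c_def inner_minus_right)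
    also have "column j A \<bullet> z = vec_ln v $ j - vec_ln u $ j"
      using assms(4) by (simp add: vec_eq_iff transpose_def column_def matrix_vector_mult_def inner_vec_def)
    finally have "vpow c (column j A) = exp (vec_ln u $ j - vec_ln v $ j)"
      by simp
    then show ?thesis
      using assms(2,3) by (simp add: pos_vec_def vec_ln_def exp_diff less_imp_neq[symmetric])
  qed
  then have "(\<chi> j. v $ j * vpow c (column j A)) = u"
    by (simp add: vec_eq_iff)
  moreover have "vpow c \<beta> = exp (- (\<beta> \<bullet> z))"
    using vpow_eq_exp_inner[OF c] by (simp add: c_def inner_minus_right)
  moreover have "\<bar>F (\<chi> j. v $ j * vpow c (column j A)) - F v * vpow c \<beta>\<bar> \<le> \<epsilon> * \<bar>F v\<bar> * vpow c \<beta>"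
    using assms(1,2) c unfolding S_class_def by blast
  ultimately show ?thesis
    by simp
qed

lemma vpow_ratio_shift:
  assumes "pos_vec v" and "pos_vec u" and "transpose A *v z = vec_ln v - vec_ln u"
  shows "vpow v y / vpow u y = exp ((A *v y) \<bullet> z)"
proof -
  have "(A *v y) \<bullet> z = y \<bullet> vec_ln v - y \<bullet> vec_ln u"
    using inner_transpose_mult[of A z y] assms(3) by (simp add: inner_commute inner_diff_right)
  then show ?thesis
    by (simp add: vpow_eq_exp_inner assms(1,2) exp_diff)
qed

lemma relative_error_estimate:
  fixes a b p q t \<epsilon> :: real
  assumes "b > 0" and "\<epsilon> \<ge> 0" and "\<bar>q - a * b\<bar> \<le> \<epsilon> * \<bar>a\<bar> * b" and "\<bar>ln p\<bar> \<le> t" and "p > 0"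
  shows "\<bar>a - q * (p / b)\<bar> \<le> \<bar>a\<bar> * ((1 + \<epsilon>) * exp t - 1)"
proof -
  have "exp (ln p) \<le> exp t" and "exp (- t) \<le> exp (ln p)"
    using assms(4) by simp_all
  then have p_le: "p \<le> exp t" and p_ge: "exp (- t) \<le> p"
    using assms(5) by simp_all
  have "\<bar>(q - a * b) * (p / b)\<bar> \<le> \<epsilon> * \<bar>a\<bar> * p"
    using mult_right_mono[OF assms(3), of "p / b"] assms(1,5) by (simp add: abs_mult)
  also have "\<dots> \<le> \<epsilon> * \<bar>a\<bar> * exp t"
    using p_le assms(2) by (simp add: mult_left_mono)
  finally have err: "\<bar>(q - a * b) * (p / b)\<bar> \<le> \<epsilon> * \<bar>a\<bar> * exp t" .
  \<comment> \<open>\<open>1 - e\<^sup>-\<^sup>t \<le> e\<^sup>t - 1\<close> since \<open>e\<^sup>t + e\<^sup>-\<^sup>t \<ge> 2\<close>\<close>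
  have "1 + t \<le> exp t" and "1 + - t \<le> exp (- t)"
    by (rule exp_ge_add_one_self)+
  then have "1 - exp (- t) \<le> exp t - 1"
    by linarith
  then have "\<bar>a * (1 - p)\<bar> \<le> \<bar>a\<bar> * (exp t - 1)"
    using p_le p_ge by (simp add: abs_mult mult_left_mono)
  moreover have "a - q * (p / b) = a * (1 - p) - (q - a * b) * (p / b)"
    using assms(1) by (simp add: field_simps)
  ultimately have "\<bar>a - q * (p / b)\<bar> \<le> \<bar>a\<bar> * (exp t - 1) + \<epsilon> * \<bar>a\<bar> * exp t"
    using err by (smt (verit) abs_triangle_ineq4)
  then show ?thesis
    by (simp add: algebra_simps)
qed

lemma S_class_monomial_estimate:
  assumes FS: "F \<in> S_class A \<beta> \<epsilon>" and "\<epsilon> \<ge> 0" and "pos_vec v" and "pos_vec u"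
    and z: "transpose A *v z = vec_ln v - vec_ln u"
    and "\<bar>(A *v y - \<beta>) \<bullet> z\<bar> \<le> t"
  shows "\<bar>F v - F u / vpow u y * vpow v y\<bar> \<le> \<bar>F v\<bar> * ((1 + \<epsilon>) * exp t - 1)"
proof -
  have "F u / vpow u y * vpow v y = F u * (vpow v y / vpow u y)"
    by simp
  also have "\<dots> = F u * (exp ((A *v y - \<beta>) \<bullet> z) / exp (- (\<beta> \<bullet> z)))"
    using vpow_ratio_shift[OF assms(3,4) z] by (simp add: inner_diff_left flip: exp_diff)
  finally show ?thesis
    using relative_error_estimate[OF exp_gt_zero \<open>\<epsilon> \<ge> 0\<close> S_class_shift[OF FS assms(3,4) z]] assms(6)
    by simp
qed

lemma vec_ln_vpow_rows:
  assumes "pos_vec v"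
  shows "(\<chi> s. ln (vpow v (row s X))) = X *v vec_ln v"
  using vpow_eq_exp_inner[OF assms]
  by (simp add: vec_eq_iff row_def matrix_vector_mult_def inner_vec_def mult.commute)

lemma S_class_kernel_projection_estimate:
  fixes A :: "real^'n^'m" and X :: "real^'n^'k"
  assumes FS: "F \<in> S_class A \<beta> \<epsilon>" and eps: "\<epsilon> \<ge> 0"
    and y_approx: "maxnorm (A *v y - \<beta>) \<le> \<delta>"
    and X_span: "span (rows X) = {x. A *v x = 0}"
    and M: "\<And>s j. \<bar>X $ s $ j\<bar> \<le> M"
    and K: "0 < K" and v_bounds: "\<forall>i. inverse K \<le> v $ i \<and> v $ i \<le> K"
  defines "u \<equiv> vec_exp (pinv X *v (X *v vec_ln v))"
  shows "\<bar>F v - F u / vpow u y * vpow v y\<bar>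
    \<le> \<bar>F v\<bar> * ((1 + \<epsilon>) * K powr (real CARD('m) * \<delta> * mat_inf_norm (pinv (transpose A))
                                  * (real CARD('n) * M * mat_inf_norm (pinv X) + 1)) - 1)"
proof -
  define L where "L = vec_ln v"
  define Lp where "Lp = pinv X *v (X *v L)"
  define z where "z = pinv (transpose A) *v (L - Lp)"
  have "pos_vec v"
    using K v_bounds by (simp add: pos_vec_if_inverse_le)
  have z: "transpose A *v z = vec_ln v - vec_ln u"
    using kernel_projection_residual_in_range_transpose[OF X_span]
    by (simp add: z_def L_def Lp_def u_def)
  have "\<bar>L $ j\<bar> \<le> ln K" for j
    using abs_vec_ln_le[of K v j] v_bounds K by (simp add: L_def)
  then have "\<bar>(L - Lp) $ j\<bar> \<le> ln K * (real CARD('n) * M * mat_inf_norm (pinv X) + 1)" for j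
    unfolding Lp_def using M by (rule abs_kernel_projection_residual_le)
  then have "\<bar>z $ i\<bar> \<le> mat_inf_norm (pinv (transpose A))
                         * (ln K * (real CARD('n) * M * mat_inf_norm (pinv X) + 1))" for i
    unfolding z_def by (rule abs_matrix_vector_mult_le)
  then have "\<bar>(A *v y - \<beta>) \<bullet> z\<bar> \<le> real CARD('m) * \<delta> * mat_inf_norm (pinv (transpose A))
               * (real CARD('n) * M * mat_inf_norm (pinv X) + 1) * ln K"
    using abs_inner_le[of "A *v y - \<beta>" \<delta>] maxnorm_ge y_approx order_trans
    by (fastforce simp: algebra_simps)
  then show ?thesis
    using S_class_monomial_estimate[OF FS eps \<open>pos_vec v\<close> _ z] K
    by (simp add: u_def pos_vec_vec_exp powr_def)
qed

theorem theorem3p2: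
  fixes A :: "real^'n^'m" and \<beta> :: "real^'m" and \<epsilon> \<delta> K :: real
    and F :: "real^'n \<Rightarrow> real" and y :: "real^'n" and X :: "real^'n^'k"
  assumes rank_lt: "rank A < CARD('n)"
    and k_def: "CARD('k) = CARD('n) - rank A"
    and eps: "\<epsilon> \<ge> 0"
    and FS: "F \<in> S_class A \<beta> \<epsilon>"
    and delta: "\<delta> \<ge> 0"
    and y_approx: "maxnorm (A *v y - \<beta>) \<le> \<delta>"
    and X_indep: "\<forall>c :: 'k \<Rightarrow> real. (\<Sum>s\<in>UNIV. c s *\<^sub>R row s X) = 0 \<longrightarrow> (\<forall>s. c s = 0)"
    and X_span: "span (rows X) = {x. A *v x = 0}"
    and K: "K > 1"
  shows "\<forall>v :: real^'n. (\<forall>i. inverse K \<le> v $ i \<and> v $ i \<le> K) \<longrightarrow>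
    (let D = pinv (transpose A);
         \<pi> = (\<lambda>u :: real^'n. \<chi> s :: 'k. vpow u (row s X));
         \<psi> = (\<lambda>w :: real^'k. \<chi> j :: 'n. exp ((pinv X *v (\<chi> s. ln (w $ s))) $ j));
         G = (\<lambda>w. F (\<psi> w) / vpow (\<psi> w) y);
         M = Max (range (\<lambda>(s, j). \<bar>X $ s $ j\<bar>));
         m = real CARD('m); n = real CARD('n)
     in \<bar>F v - G (\<pi> v) * vpow v y\<bar>
        \<le> \<bar>F v\<bar> * ((1 + \<epsilon>) * K powr (m * \<delta> * mat_inf_norm D * (n * M * mat_inf_norm (pinv X) + 1)) - 1))"
  \<comment> \<open>\<open>X\<^sup>\<dagger>X\<close> projects onto the row space of \<open>X\<close> whether or not the rows are independent.\<close>
proof -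
  have M: "\<bar>X $ s $ j\<bar> \<le> Max (range (\<lambda>(s, j). \<bar>X $ s $ j\<bar>))" for s j
    by (rule Max_ge) auto
  have "0 < K"
    using K by simp
  note estimate = S_class_kernel_projection_estimate[OF FS eps y_approx X_span M \<open>0 < K\<close>]
  have "(\<chi> s. ln (vpow v (row s X))) = X *v vec_ln v"
    if "\<forall>i. inverse K \<le> v $ i \<and> v $ i \<le> K" for v :: "real^'n"
    using that \<open>0 < K\<close> by (simp add: pos_vec_if_inverse_le vec_ln_vpow_rows)
  then show ?thesis
    using estimate unfolding Let_def by (simp add: vec_exp_def)
qed

end
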